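(* Let $p\in[1,\infty)$, $a\in[0,1)$, and let $\phi:\mathbb{R}^d\to\mathbb{R}^d$ be a bi-Lipschitz homeomorphism preserving Lebesgue measure. Then there is a constant $C$ depending only on $d$, $p$ and $a$ such that for every locally integrable $f$ on $\mathbb{R}^d$, $$\|f\circ\phi\|^\sharp_{p,a}\le C\,\rho_a(K_\phi)\,\|f\|^\sharp_{p,a}.$$ In particular (case $a=0$), $\|f\circ\phi\|_{\mathrm{BMO}}\le C\log(K_\phi)\|f\|_{\mathrm{BMO}}$, and for $a\in(0,1)$, $\|f\circ\phi\|_{\mathrm{Lip}_p(a)}\le C K_\phi^a\|f\|_{\mathrm{Lip}_p(a)}$.
   Context: For a bi-Lipschitz homeomorphism $\phi$ of $\mathbb{R}^d$, $K_\phi:=\sup_{x\neq y}\left(\frac{|\phi(x)-\phi(y)|}{|x-y|}+\frac{|x-y|}{|\phi(x)-\phi(y)|}\right)$. "Preserving Lebesgue measure" means $|\phi(A)|=|A|$ for all measurable $A$. For $a\in[0,1]$, $\rho_a(r)=r^a$ if $a>0$ and $\rho_0(r)=\log r$. For $p\in[1,\infty)$, $a\in[0,1]$ and $f\in L^1_{loc}(\mathbb{R}^d)$, $$\|f\|^\sharp_{p,a}=\sup_B\left(\frac{1}{|B|^{1+ap/d}}\int_B\Big|f(y)-\frac{1}{|B|}\int_B f\Big|^p\,dy\right)^{1/p},$$ the supremum over all balls $B\subset\mathbb{R}^d$. $\mathrm{BMO}$ is the space of $f$ with $\|f\|^\sharp_{1,0}<\infty$ (by John–Nirenberg, $\|f\|^\sharp_{p,0}$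 are all equivalent norms, denoted $\|f\|_{\mathrm{BMO}}$), and $\mathrm{Lip}_p(a)$, $a\in(0,1]$, is the space of $f$ with $\|f\|^\sharp_{p,a}<\infty$, normed by $\|f\|^\sharp_{p,a}$. *)

theory Defs
  imports "HOL-Analysis.Analysis"
begin

definition enn_root :: "real \<Rightarrow> ennreal \<Rightarrow> ennreal" where
  "enn_root p x = (if x = \<infinity> then \<infinity> else ennreal (enn2real x powr (1 / p)))"

definition ball_avg :: "('a::euclidean_space \<Rightarrow> real) \<Rightarrow> 'a \<Rightarrow> real \<Rightarrow> real" where
  "ball_avg f x r = (LINT y:ball x r|lebesgue. f y) / measure lebesgue (ball x r)"

definition ball_osc :: "real \<Rightarrow> real \<Rightarrow> ('a::euclidean_space \<Rightarrow> real) \<Rightarrow> 'a \<Rightarrow> real \<Rightarrow> ennreal" where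
  "ball_osc p a f x r =
     enn_root p ((\<integral>\<^sup>+ y\<in>ball x r. ennreal (\<bar>f y - ball_avg f x r\<bar> powr p) \<partial>lebesgue)
                 / ennreal (measure lebesgue (ball x r) powr (1 + a * p / real DIM('a))))"

definition sharp_norm :: "real \<Rightarrow> real \<Rightarrow> ('a::euclidean_space \<Rightarrow> real) \<Rightarrow> ennreal" where
  "sharp_norm p a f = (SUP xr \<in> {(x, r). r > 0}. ball_osc p a f (fst xr) (snd xr))"

definition rho :: "real \<Rightarrow> real \<Rightarrow> real" where
  "rho a r = (if a > 0 then r powr a else ln r)"

definition K_const :: "('a::euclidean_space \<Rightarrow> 'a) \<Rightarrow> real" where
  "K_const \<phi> = Sup {dist (\<phi> x) (\<phi> y) / dist x y + dist x y / dist (\<phi> x) (\<phi> y) | x y. x \<noteq> y}"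

definition bi_lipschitz :: "('a::euclidean_space \<Rightarrow> 'a) \<Rightarrow> bool" where
  "bi_lipschitz \<phi> \<longleftrightarrow> (\<exists>L. \<forall>x y. dist (\<phi> x) (\<phi> y) \<le> L * dist x y \<and> dist x y \<le> L * dist (\<phi> x) (\<phi> y))"

definition preserves_lebesgue :: "('a::euclidean_space \<Rightarrow> 'a) \<Rightarrow> bool" where
  "preserves_lebesgue \<phi> \<longleftrightarrow> (\<forall>A \<in> sets lebesgue. \<phi> ` A \<in> sets lebesgue \<and> emeasure lebesgue (\<phi> ` A) = emeasure lebesgue A)"

definition locally_integrable :: "('a::euclidean_space \<Rightarrow> real) \<Rightarrow> bool" where
  "locally_integrable f \<longleftrightarrow> (\<forall>K. compact K \<longrightarrow> set_integrable lebesgue K f)"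

end

theory Submission
  imports Defs
begin

text \<open>Fix a ball \<open>B = B(x, r)\<close>. Its image \<open>\<phi>(B)\<close> has the volume of \<open>B\<close>, so a maximal
  \<open>r/K\<close>-separated subset of \<open>\<phi>(B)\<close> has at most \<open>(4K)^d\<close> points, and the balls of radius \<open>r/K\<close>
  around them cover \<open>\<phi>(B)\<close>. On each of these small balls \<open>f\<close> stays close to its own mean, and
  all these means are close to one common constant: each small ball is joined to
  \<open>B(\<phi>(x), 2^(n+1) r/K)\<close> by about \<open>2 log\<^sub>2 K\<close> doublings, a doubling at radius \<open>t\<close> costing
  \<open>\<lesssim> \<parallel>f\<parallel> t^a\<close>. The sum of these costs is \<open>\<lesssim> \<parallel>f\<parallel> log K\<close> for \<open>a = 0\<close> and a geometric
  series \<open>\<lesssim> \<parallel>f\<parallel> K^a r^a\<close> for \<open>a > 0\<close>, which is where \<open>\<rho>\<^sub>a(K)\<close> comes from. Summing over the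
  cover and changing variables by the measure preserving \<open>\<phi>\<close> bounds the mean oscillation of
  \<open>f \<circ> \<phi>\<close> on \<open>B\<close>.\<close>

abbreviation dev_integral :: "real \<Rightarrow> ('a::euclidean_space \<Rightarrow> real) \<Rightarrow> 'a set \<Rightarrow> real \<Rightarrow> ennreal" where
  "dev_integral p h B c \<equiv> \<integral>\<^sup>+ y\<in>B. ennreal (\<bar>h y - c\<bar> powr p) \<partial>lebesgue"

lemma powr_tangent_le:
  fixes t m p :: real
  assumes "t \<ge> 0" "m > 0" "p \<ge> 1"
  shows "m powr p + p * m powr (p - 1) * (t - m) \<le> t powr p"
proof (cases "t = 0 \<or> p = 1")
  case True
  then show ?thesis
    using assms by (auto simp: powr_diff field_simps)
next
  case False
  then have t: "t > 0" and p: "p > 1" using assms by auto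
  have "(t powr p) powr (1/p) * (m powr p) powr (1 - 1/p) \<le> (1/p) * t powr p + (1 - 1/p) * m powr p"
    by (rule Youngs_inequality_0) (use p t assms in auto)
  moreover have "(t powr p) powr (1/p) = t" using p t by (simp add: powr_powr)
  moreover have "(m powr p) powr (1 - 1/p) = m powr (p - 1)"
    using p assms by (simp add: powr_powr algebra_simps)
  ultimately have "p * (t * m powr (p - 1)) \<le> p * ((1/p) * t powr p + (1 - 1/p) * m powr p)"
    using p by simp
  also have "\<dots> = t powr p + (p - 1) * m powr p" using p by (simp add: algebra_simps)
  finally have "p * t * m powr (p - 1) \<le> t powr p + (p - 1) * m powr p"
    by (simp add: mult.assoc)
  moreover have "m powr p = m * m powr (p - 1)" using assms by (simp add: powr_diff field_simps)
  ultimately show ?thesis by (simp add: algebra_simps)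
qed

lemma powr_add_le:
  fixes u v p :: real
  assumes "u \<ge> 0" "v \<ge> 0" "p \<ge> 1"
  shows "(u + v) powr p \<le> 2 powr p * (u powr p + v powr p)"
proof -
  have "(u + v) powr p \<le> (2 * max u v) powr p"
    by (rule powr_mono2) (use assms in auto)
  also have "\<dots> = 2 powr p * max u v powr p" using assms by (simp add: powr_mult)
  also have "max u v powr p \<le> u powr p + v powr p"
    by (cases "u \<le> v") (auto simp: max_def)
  then have "2 powr p * max u v powr p \<le> 2 powr p * (u powr p + v powr p)" by simp
  finally show ?thesis .
qed

lemma powr_le_powr_iff:
  fixes x y p :: real
  assumes "x \<ge> 0" "y \<ge> 0" "p > 0"
  shows "x powr p \<le> y powr p \<longleftrightarrow> x \<le> y"
  using assms by (meson not_le powr_less_mono2 powr_mono2 less_imp_le)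

lemma enn_root_divide_le_ennreal_iff:
  assumes "Q > 0" "M \<ge> 0" "p \<ge> 1"
  shows "enn_root p (X / ennreal Q) \<le> ennreal M \<longleftrightarrow> X \<le> ennreal (M powr p * Q)"
proof (cases "X = \<infinity>")
  case True
  then show ?thesis using assms by (simp add: enn_root_def ennreal_divide_eq_top_iff top_unique)
next
  case False
  then obtain x where x: "X = ennreal x" "x \<ge> 0" by (cases X) auto
  have "X / ennreal Q = ennreal (x / Q)" using x assms by (simp add: divide_ennreal)
  then have root: "enn_root p (X / ennreal Q) = ennreal ((x/Q) powr (1/p))"
    using x assms by (simp add: enn_root_def)
  have "(x/Q) powr (1/p) \<le> M \<longleftrightarrow> ((x/Q) powr (1/p)) powr p \<le> M powr p"
    using assms x by (simp add: powr_le_powr_iff)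
  also have "\<dots> \<longleftrightarrow> x \<le> M powr p * Q"
    using assms x by (simp add: powr_powr divide_le_eq)
  finally show ?thesis using root x assms by (simp add: ennreal_le_iff)
qed

lemma set_integrable_const_real:
  assumes "A \<in> sets M" "emeasure M A < \<infinity>"
  shows "set_integrable M A (\<lambda>_. c::real)"
  unfolding set_integrable_def using assms by simp

lemma nn_set_integral_eq_set_integral_nonneg:
  fixes k :: "'b \<Rightarrow> real"
  assumes "set_integrable M A k" "\<And>y. y \<in> A \<Longrightarrow> k y \<ge> 0"
  shows "(\<integral>\<^sup>+ y\<in>A. ennreal (k y) \<partial>M) = ennreal (LINT y:A|M. k y)"
proof -
  have "(\<integral>\<^sup>+ y\<in>A. ennreal (k y) \<partial>M) = (\<integral>\<^sup>+ y. ennreal (indicator A y *\<^sub>R k y) \<partial>M)"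
    by (intro nn_integral_cong) (auto split: split_indicator)
  also have "\<dots> = ennreal (LINT y|M. indicator A y *\<^sub>R k y)"
    using assms unfolding set_integrable_def
    by (intro nn_integral_eq_integral) (auto split: split_indicator)
  finally show ?thesis by (simp add: set_lebesgue_integral_def)
qed

lemma set_integral_nonneg_real:
  fixes g :: "'b \<Rightarrow> real"
  assumes "\<And>y. y \<in> A \<Longrightarrow> 0 \<le> g y"
  shows "0 \<le> (LINT y:A|M. g y)"
  unfolding set_lebesgue_integral_def
  by (rule Bochner_Integration.integral_nonneg) (use assms in \<open>simp split: split_indicator\<close>)

lemma set_integrable_abs_powr:
  fixes h :: "'b \<Rightarrow> real"
  assumes h: "set_integrable M A h" and fin: "(\<integral>\<^sup>+ y\<in>A. ennreal (\<bar>h y\<bar> powr p) \<partial>M) < \<infinity>"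
  shows "set_integrable M A (\<lambda>y. \<bar>h y\<bar> powr p)"
  unfolding set_integrable_def
proof (rule integrableI_nonneg)
  have "(\<lambda>y. \<bar>indicator A y *\<^sub>R h y\<bar> powr p) \<in> borel_measurable M"
    using h unfolding set_integrable_def by measurable
  moreover have "(\<lambda>y. \<bar>indicator A y *\<^sub>R h y\<bar> powr p) = (\<lambda>y. indicator A y *\<^sub>R \<bar>h y\<bar> powr p)"
    by (auto simp: fun_eq_iff split: split_indicator)
  ultimately show "(\<lambda>y. indicator A y *\<^sub>R \<bar>h y\<bar> powr p) \<in> borel_measurable M"
    by simp
  show "AE y in M. 0 \<le> indicator A y *\<^sub>R \<bar>h y\<bar> powr p"
    by (auto split: split_indicator)
  have "(\<integral>\<^sup>+ y. ennreal (indicator A y *\<^sub>R \<bar>h y\<bar> powr p) \<partial>M) = (\<integral>\<^sup>+ y\<in>A. ennreal (\<bar>h y\<bar> powr p) \<partial>M)"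
    by (intro nn_integral_cong) (auto split: split_indicator)
  with fin show "(\<integral>\<^sup>+ y. ennreal (indicator A y *\<^sub>R \<bar>h y\<bar> powr p) \<partial>M) < \<infinity>"
    by simp
qed

lemma set_average_powr_le:
  fixes g :: "'b \<Rightarrow> real"
  assumes A: "A \<in> sets M" "emeasure M A < \<infinity>" "0 < measure M A"
    and g: "set_integrable M A g" "set_integrable M A (\<lambda>y. g y powr p)" "\<And>y. y \<in> A \<Longrightarrow> 0 \<le> g y"
    and p: "p \<ge> 1"
  shows "((LINT y:A|M. g y) / measure M A) powr p * measure M A \<le> (LINT y:A|M. g y powr p)"
proof -
  define \<mu> where "\<mu> = measure M A"
  define m where "m = (LINT y:A|M. g y) / \<mu>"
  have \<mu>: "\<mu> > 0" using A by (simp add: \<mu>_def)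
  have "m \<ge> 0" unfolding m_def using \<mu> g(3) by (simp add: set_integral_nonneg_real)
  have "m powr p * \<mu> \<le> (LINT y:A|M. g y powr p)"
  proof (cases "m = 0")
    case True
    have "0 \<le> (LINT y:A|M. g y powr p)" by (rule set_integral_nonneg_real) simp
    with True show ?thesis by simp
  next
    case False
    with \<open>m \<ge> 0\<close> have m: "m > 0" by simp
    have const: "set_integrable M A (\<lambda>_. c)" for c :: real
      by (rule set_integrable_const_real[OF A(1,2)])
    have tangent: "set_integrable M A (\<lambda>y. m powr p + p * m powr (p - 1) * (g y - m))"
      using g const by (intro set_integral_add set_integral_diff set_integrable_mult_right) auto
    have "m powr p * \<mu> = (LINT y:A|M. m powr p + p * m powr (p - 1) * (g y - m))"
      using g const A \<mu> by (simp add: set_integral_const \<mu>_def m_def less_top[symmetric] field_simps)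
    also have "\<dots> \<le> (LINT y:A|M. g y powr p)"
      using g(3) by (intro set_integral_mono[OF tangent g(2)] powr_tangent_le[OF _ m p])
    finally show ?thesis .
  qed
  then show ?thesis by (simp add: m_def \<mu>_def)
qed

lemma abs_set_average_powr_le:
  fixes h :: "'b \<Rightarrow> real"
  assumes A: "A \<in> sets M" "emeasure M A < \<infinity>" "0 < measure M A"
    and h: "set_integrable M A h" and p: "p \<ge> 1"
  shows "ennreal (\<bar>(LINT y:A|M. h y) / measure M A - c\<bar> powr p * measure M A)
           \<le> (\<integral>\<^sup>+ y\<in>A. ennreal (\<bar>h y - c\<bar> powr p) \<partial>M)"
proof (cases "(\<integral>\<^sup>+ y\<in>A. ennreal (\<bar>h y - c\<bar> powr p) \<partial>M) = \<infinity>")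
  case False
  define \<mu> where "\<mu> = measure M A"
  have \<mu>: "\<mu> > 0" using A by (simp add: \<mu>_def)
  have hc: "set_integrable M A (\<lambda>y. h y - c)"
    using h set_integrable_const_real[OF A(1,2)] by auto
  have powr_hc: "set_integrable M A (\<lambda>y. \<bar>h y - c\<bar> powr p)"
    using set_integrable_abs_powr[OF hc] False by (simp add: less_top)
  have "(LINT y:A|M. c) = \<mu> * c"
    using set_integral_const[OF A(1), of c] A(2) by (simp add: \<mu>_def less_top)
  then have "(LINT y:A|M. h y) / \<mu> - c = (LINT y:A|M. h y - c) / \<mu>"
    using h set_integrable_const_real[OF A(1,2)] \<mu> by (simp add: field_simps)
  then have "\<bar>(LINT y:A|M. h y) / \<mu> - c\<bar> \<le> (LINT y:A|M. \<bar>h y - c\<bar>) / \<mu>"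
    using set_integral_norm_bound[OF hc] \<mu> by (simp add: abs_divide divide_right_mono)
  then have "\<bar>(LINT y:A|M. h y) / \<mu> - c\<bar> powr p * \<mu> \<le> ((LINT y:A|M. \<bar>h y - c\<bar>) / \<mu>) powr p * \<mu>"
    using p \<mu> by (intro mult_right_mono powr_mono2) auto
  also have "\<dots> \<le> (LINT y:A|M. \<bar>h y - c\<bar> powr p)"
    unfolding \<mu>_def using set_integrable_abs[OF hc] powr_hc by (rule set_average_powr_le[OF A]) (use p in auto)
  finally have "ennreal (\<bar>(LINT y:A|M. h y) / \<mu> - c\<bar> powr p * \<mu>) \<le> ennreal (LINT y:A|M. \<bar>h y - c\<bar> powr p)"
    by (rule ennreal_leI)
  also have "\<dots> = (\<integral>\<^sup>+ y\<in>A. ennreal (\<bar>h y - c\<bar> powr p) \<partial>M)"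
    by (rule nn_set_integral_eq_set_integral_nonneg[OF powr_hc, symmetric]) simp
  finally show ?thesis by (simp add: \<mu>_def)
qed simp

lemma dev_integral_shift_le:
  fixes h :: "'a::euclidean_space \<Rightarrow> real"
  assumes p: "p \<ge> 1" and [measurable]: "h \<in> borel_measurable lebesgue"
    and [measurable]: "B \<in> sets lebesgue" and B: "emeasure lebesgue B < \<infinity>"
  shows "dev_integral p h B c
     \<le> ennreal (2 powr p) * dev_integral p h B c' + ennreal (2 powr p * \<bar>c' - c\<bar> powr p * measure lebesgue B)"
proof -
  have "dev_integral p h B c
        \<le> (\<integral>\<^sup>+ y. (ennreal (2 powr p) * (ennreal (\<bar>h y - c'\<bar> powr p) * indicator B y)
               + ennreal (2 powr p * \<bar>c' - c\<bar> powr p) * indicator B y) \<partial>lebesgue)"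
  proof (rule nn_integral_mono)
    fix y
    have "\<bar>h y - c\<bar> powr p \<le> (\<bar>h y - c'\<bar> + \<bar>c' - c\<bar>) powr p"
      by (rule powr_mono2) (use p in auto)
    also have "\<dots> \<le> 2 powr p * (\<bar>h y - c'\<bar> powr p + \<bar>c' - c\<bar> powr p)"
      by (rule powr_add_le) (use p in auto)
    finally have "ennreal (\<bar>h y - c\<bar> powr p)
        \<le> ennreal (2 powr p) * ennreal (\<bar>h y - c'\<bar> powr p) + ennreal (2 powr p * \<bar>c' - c\<bar> powr p)"
      by (simp add: ennreal_mult'[symmetric] ennreal_plus[symmetric] distrib_left del: ennreal_plus)
    then show "ennreal (\<bar>h y - c\<bar> powr p) * indicator B y
        \<le> ennreal (2 powr p) * (ennreal (\<bar>h y - c'\<bar> powr p) * indicator B y)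
           + ennreal (2 powr p * \<bar>c' - c\<bar> powr p) * indicator B y"
      by (auto split: split_indicator)
  qed
  also have "\<dots> = ennreal (2 powr p) * dev_integral p h B c'
                 + ennreal (2 powr p * \<bar>c' - c\<bar> powr p) * emeasure lebesgue B"
    by (subst nn_integral_add) (simp_all add: nn_integral_cmult nn_integral_cmult_indicator)
  also have "emeasure lebesgue B = ennreal (measure lebesgue B)"
    using B by (simp add: emeasure_eq_ennreal_measure)
  finally show ?thesis by (simp add: ennreal_mult'[symmetric])
qed

lemma emeasure_lebesgue_ball:
  fixes c :: "'a::euclidean_space"
  assumes "r \<ge> 0"
  shows "emeasure lebesgue (ball c r) = ennreal (unit_ball_vol DIM('a) * r ^ DIM('a))"
  using emeasure_ball[of r c] assms by (simp add: emeasure_completion)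

lemma measure_lebesgue_ball:
  fixes c :: "'a::euclidean_space"
  assumes "r \<ge> 0"
  shows "measure lebesgue (ball c r) = unit_ball_vol DIM('a) * r ^ DIM('a)"
  using emeasure_lebesgue_ball[OF assms, of c] assms unfolding measure_def by simp

lemma measure_lebesgue_ball_pos:
  fixes c :: "'a::euclidean_space"
  shows "r > 0 \<Longrightarrow> measure lebesgue (ball c r) > 0"
  by (simp add: measure_lebesgue_ball)

lemma emeasure_lebesgue_ball_finite:
  fixes c :: "'a::euclidean_space"
  shows "emeasure lebesgue (ball c r) < \<infinity>"
proof (cases "r \<ge> 0")
  case True
  then show ?thesis by (simp only: emeasure_lebesgue_ball) simp
qed (simp add: ball_empty)

lemma measure_lebesgue_ball_powr:
  fixes c :: "'a::euclidean_space"
  assumes "r > 0"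
  shows "measure lebesgue (ball c r) powr (a / DIM('a))
           = unit_ball_vol DIM('a) powr (a / DIM('a)) * r powr a"
proof -
  have "measure lebesgue (ball c r) powr (a / DIM('a))
        = unit_ball_vol DIM('a) powr (a / DIM('a)) * (r ^ DIM('a)) powr (a / DIM('a))"
    using assms unfolding measure_lebesgue_ball[OF less_imp_le[OF assms]] by (simp add: powr_mult)
  also have "(r ^ DIM('a)) powr (a / DIM('a)) = r powr a"
    using assms by (simp add: powr_realpow[symmetric] powr_powr)
  finally show ?thesis .
qed

lemma dev_integral_ball_avg_le:
  fixes h :: "'a::euclidean_space \<Rightarrow> real"
  assumes p: "p \<ge> 1" and hm: "h \<in> borel_measurable lebesgue"
    and hi: "set_integrable lebesgue (ball x r) h" and r: "r > 0"
  shows "dev_integral p h (ball x r) (ball_avg h x r)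
          \<le> ennreal (2 powr (p + 1)) * dev_integral p h (ball x r) c"
proof -
  define m where "m = ball_avg h x r"
  define V where "V = measure lebesgue (ball x r)"
  define I where "I = dev_integral p h (ball x r) c"
  have jensen: "ennreal (\<bar>m - c\<bar> powr p * V) \<le> I"
    unfolding I_def m_def V_def ball_avg_def
    by (rule abs_set_average_powr_le[OF _ emeasure_lebesgue_ball_finite
          measure_lebesgue_ball_pos[OF r] hi p]) simp
  have "dev_integral p h (ball x r) m \<le> ennreal (2 powr p) * I + ennreal (2 powr p * \<bar>c - m\<bar> powr p * V)"
    unfolding I_def V_def
    by (rule dev_integral_shift_le[OF p hm _ emeasure_lebesgue_ball_finite]) simp
  also have "ennreal (2 powr p * \<bar>c - m\<bar> powr p * V) = ennreal (2 powr p) * ennreal (\<bar>m - c\<bar> powr p * V)"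
    by (simp add: V_def ennreal_mult abs_minus_commute mult.assoc)
  also have "\<dots> \<le> ennreal (2 powr p) * I"
    using jensen by (rule mult_left_mono) simp
  also have "ennreal (2 powr p) * I + ennreal (2 powr p) * I = ennreal (2 powr (p + 1)) * I"
    by (simp add: powr_add ennreal_mult' mult_2_right[symmetric] algebra_simps)
  finally show ?thesis
    by (simp add: m_def I_def add_left_mono)
qed

lemma locally_integrable_set_integrable_ball:
  assumes "locally_integrable f"
  shows "set_integrable lebesgue (ball x r) f"
proof -
  have "set_integrable lebesgue (cball x r) f"
    using assms by (simp add: locally_integrable_def)
  then show ?thesis by (rule set_integrable_subset) auto
qed

lemma locally_integrable_borel_measurable:
  fixes f :: "'a::euclidean_space \<Rightarrow> real"
  assumes "locally_integrable f"
  shows "f \<in> borel_measurable lebesgue"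
proof (rule borel_measurable_LIMSEQ_real)
  show "(\<lambda>x. indicator (ball 0 (real i)) x *\<^sub>R f x) \<in> borel_measurable lebesgue" for i
    using locally_integrable_set_integrable_ball[OF assms] unfolding set_integrable_def by auto
next
  fix x :: 'a
  obtain N :: nat where "norm x < real N" using reals_Archimedean2 by blast
  then have "\<forall>\<^sub>F i in sequentially. indicator (ball 0 (real i)) x *\<^sub>R f x = f x"
    unfolding eventually_sequentially
    by (intro exI[of _ N]) (auto simp: dist_norm intro: order_less_le_trans)
  then show "(\<lambda>i. indicator (ball 0 (real i)) x *\<^sub>R f x) \<longlonglongrightarrow> f x"
    by (rule tendsto_eventually)
qed

lemma sharp_norm_le_ennreal_iff:
  fixes f :: "'a::euclidean_space \<Rightarrow> real"
  assumes "p \<ge> 1" "M \<ge> 0"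
  shows "sharp_norm p a f \<le> ennreal M \<longleftrightarrow>
    (\<forall>x r. r > 0 \<longrightarrow> dev_integral p f (ball x r) (ball_avg f x r)
        \<le> ennreal (M powr p * measure lebesgue (ball x r) powr (1 + a * p / DIM('a))))"
proof -
  have "ball_osc p a f x r \<le> ennreal M \<longleftrightarrow> dev_integral p f (ball x r) (ball_avg f x r)
        \<le> ennreal (M powr p * measure lebesgue (ball x r) powr (1 + a * p / DIM('a)))"
    if "r > 0" for x r
    unfolding ball_osc_def using that assms
    by (intro enn_root_divide_le_ennreal_iff) (simp_all add: measure_lebesgue_ball_pos)
  then show ?thesis
    unfolding sharp_norm_def by (auto simp: SUP_le_iff)
qed

lemma dev_integral_ball_avg_le_sharp_norm:
  fixes f :: "'a::euclidean_space \<Rightarrow> real"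
  assumes "sharp_norm p a f \<le> ennreal M" "p \<ge> 1" "M \<ge> 0" "r > 0"
  shows "dev_integral p f (ball x r) (ball_avg f x r)
           \<le> ennreal (M powr p * measure lebesgue (ball x r) powr (1 + a * p / DIM('a)))"
  using assms sharp_norm_le_ennreal_iff by blast

lemma dev_integral_small_ball_le:
  fixes f :: "'a::euclidean_space \<Rightarrow> real"
  assumes p: "p \<ge> 1" "0 \<le> a" and M: "M \<ge> 0" and f: "locally_integrable f" "sharp_norm p a f \<le> ennreal M"
    and s: "s > 0" and V: "measure lebesgue (ball w s) \<le> V" and L: "L \<ge> 0"
    and c: "\<bar>ball_avg f w s - c\<bar> \<le> 2 powr (DIM('a) / p) * L * M * V powr (a / DIM('a))"
  shows "dev_integral p f (ball w s) c
           \<le> ennreal (2 powr p * (1 + 2 powr DIM('a) * L powr p) * M powr p * V powr (a * p / DIM('a))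
                 * measure lebesgue (ball w s))"
proof -
  define d where "d = real DIM('a)"
  define Vs where "Vs = measure lebesgue (ball w s)"
  define D where "D = 2 powr (d / p) * L * M * V powr (a / d)"
  have Vs: "Vs > 0" unfolding Vs_def using s by (rule measure_lebesgue_ball_pos)
  have "dev_integral p f (ball w s) c
        \<le> ennreal (2 powr p) * dev_integral p f (ball w s) (ball_avg f w s)
          + ennreal (2 powr p * \<bar>ball_avg f w s - c\<bar> powr p * Vs)"
    unfolding Vs_def
    by (rule dev_integral_shift_le[OF p(1) locally_integrable_borel_measurable[OF f(1)] _
          emeasure_lebesgue_ball_finite]) simp
  also have "\<dots> \<le> ennreal (2 powr p) * ennreal (M powr p * Vs powr (1 + a * p / d))
                 + ennreal (2 powr p * D powr p * Vs)"
  proof (intro add_mono mult_left_mono ennreal_leI)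
    show "dev_integral p f (ball w s) (ball_avg f w s) \<le> ennreal (M powr p * Vs powr (1 + a * p / d))"
      unfolding Vs_def d_def by (rule dev_integral_ball_avg_le_sharp_norm[OF f(2) p(1) M s])
    show "2 powr p * \<bar>ball_avg f w s - c\<bar> powr p * Vs \<le> 2 powr p * D powr p * Vs"
      using c p Vs unfolding D_def d_def by (intro mult_right_mono mult_left_mono powr_mono2) auto
  qed simp_all
  also have "\<dots> = ennreal (2 powr p * Vs * (M powr p * Vs powr (a * p / d) + D powr p))"
    using Vs M by (simp add: powr_add ennreal_mult'[symmetric] ennreal_plus[symmetric] algebra_simps
        del: ennreal_plus)
  also have "\<dots> \<le> ennreal (2 powr p * Vs * (M powr p * V powr (a * p / d) * (1 + 2 powr d * L powr p)))"
  proof (intro ennreal_leI mult_left_mono)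
    have "M powr p * Vs powr (a * p / d) \<le> M powr p * V powr (a * p / d)"
      using Vs V p unfolding Vs_def d_def by (intro mult_left_mono powr_mono2) auto
    moreover have "D powr p = 2 powr d * L powr p * (M powr p * V powr (a * p / d))"
      unfolding D_def using p L M Vs V by (simp add: powr_mult powr_powr mult_ac)
    ultimately show "M powr p * Vs powr (a * p / d) + D powr p \<le> M powr p * V powr (a * p / d) * (1 + 2 powr d * L powr p)"
      by (simp add: algebra_simps)
  qed (use Vs in auto)
  finally show ?thesis
    unfolding Vs_def d_def by (simp add: mult_ac)
qed

definition doubling_const :: "real \<Rightarrow> real \<Rightarrow> real \<Rightarrow> real" where
  "doubling_const d p a = 2 powr (d / p) * unit_ball_vol d powr (a / d)"

lemma doubling_const_nonneg: "doubling_const d p a \<ge> 0"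
  by (simp add: doubling_const_def)

lemma ball_avg_nested_diff_le:
  fixes f :: "'a::euclidean_space \<Rightarrow> real"
  assumes p: "p \<ge> 1" and M: "M \<ge> 0" and f: "locally_integrable f" "sharp_norm p a f \<le> ennreal M"
    and sub: "ball x1 r1 \<subseteq> ball x2 r2" and r: "0 < r1" "r2 \<le> 2 * r1"
  shows "\<bar>ball_avg f x1 r1 - ball_avg f x2 r2\<bar> \<le> doubling_const DIM('a) p a * M * r2 powr a"
proof -
  define d where "d = real DIM('a)"
  define V1 where "V1 = measure lebesgue (ball x1 r1)"
  define V2 where "V2 = measure lebesgue (ball x2 r2)"
  have "x1 \<in> ball x2 r2" using sub r centre_in_ball[of x1 r1] by blast
  then have r2: "r2 > 0" by (meson dist_not_less_zero mem_ball order_le_less_trans not_le)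
  have V1: "V1 > 0" unfolding V1_def using r(1) by (rule measure_lebesgue_ball_pos)
  have V2: "V2 > 0" unfolding V2_def using r2 by (rule measure_lebesgue_ball_pos)
  have "r2 ^ DIM('a) \<le> (2 * r1) ^ DIM('a)" using r2 r by (intro power_mono) auto
  then have V21: "V2 \<le> 2 powr d * V1"
    unfolding V1_def V2_def d_def measure_lebesgue_ball[OF less_imp_le[OF r(1)]]
      measure_lebesgue_ball[OF less_imp_le[OF r2]]
    by (simp add: powr_realpow power_mult_distrib)
  define t where "t = \<bar>ball_avg f x1 r1 - ball_avg f x2 r2\<bar>"
  have "ennreal (t powr p * V1) \<le> dev_integral p f (ball x1 r1) (ball_avg f x2 r2)"
    unfolding t_def V1_def ball_avg_def
    by (rule abs_set_average_powr_le[OF _ emeasure_lebesgue_ball_finite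
          measure_lebesgue_ball_pos[OF r(1)] locally_integrable_set_integrable_ball[OF f(1)] p]) simp
  also have "\<dots> \<le> dev_integral p f (ball x2 r2) (ball_avg f x2 r2)"
    using sub by (intro nn_integral_mono) (auto split: split_indicator)
  also have "\<dots> \<le> ennreal (M powr p * V2 powr (1 + a * p / d))"
    unfolding V2_def d_def by (rule dev_integral_ball_avg_le_sharp_norm[OF f(2) p M r2])
  finally have "t powr p * V1 \<le> M powr p * V2 powr (a * p / d) * V2"
    using M V2 by (simp add: ennreal_le_iff powr_add mult_ac)
  also have "\<dots> \<le> M powr p * V2 powr (a * p / d) * (2 powr d * V1)"
    using V21 by (intro mult_left_mono) auto
  finally have "t powr p \<le> 2 powr d * M powr p * V2 powr (a * p / d)"
    using V1 by (simp add: algebra_simps)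
  also have "\<dots> = (2 powr (d / p) * M * V2 powr (a / d)) powr p"
    using M p by (simp add: powr_mult powr_powr)
  finally have "t \<le> 2 powr (d / p) * M * V2 powr (a / d)"
    using p M by (simp add: powr_le_powr_iff t_def)
  also have "V2 powr (a / d) = unit_ball_vol d powr (a / d) * r2 powr a"
    unfolding V2_def d_def by (rule measure_lebesgue_ball_powr[OF r2])
  finally show ?thesis
    by (simp add: t_def d_def doubling_const_def mult_ac)
qed

lemma ball_avg_dyadic_diff_le:
  fixes f :: "'a::euclidean_space \<Rightarrow> real"
  assumes p: "p \<ge> 1" and M: "M \<ge> 0" and f: "locally_integrable f" "sharp_norm p a f \<le> ennreal M"
    and s: "s > 0"
  shows "\<bar>ball_avg f w s - ball_avg f w (2 ^ n * s)\<bar>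
           \<le> doubling_const DIM('a) p a * M * (\<Sum>j\<in>{1..n}. (2 ^ j * s) powr a)"
proof (induction n)
  case (Suc n)
  have "\<bar>ball_avg f w (2 ^ n * s) - ball_avg f w (2 ^ Suc n * s)\<bar>
        \<le> doubling_const DIM('a) p a * M * (2 ^ Suc n * s) powr a"
  proof (rule ball_avg_nested_diff_le[OF p M f])
    show "ball w (2 ^ n * s) \<subseteq> ball w (2 ^ Suc n * s)" by (rule subset_ball) (use s in simp)
  qed (use s in auto)
  with Suc.IH show ?case by (simp add: algebra_simps)
qed simp

lemma ball_avg_chain_diff_le:
  fixes f :: "'a::euclidean_space \<Rightarrow> real"
  assumes p: "p \<ge> 1" and M: "M \<ge> 0" and f: "locally_integrable f" "sharp_norm p a f \<le> ennreal M"
    and s: "s > 0" and wz: "dist w z \<le> 2 ^ n * s"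
  shows "\<bar>ball_avg f w s - ball_avg f z (2 ^ (n + 1) * s)\<bar>
           \<le> doubling_const DIM('a) p a * M * (\<Sum>j\<in>{1..n + 1}. (2 ^ j * s) powr a)"
proof -
  have "ball w (2 ^ n * s) \<subseteq> ball z (2 ^ (n + 1) * s)"
  proof
    fix y assume "y \<in> ball w (2 ^ n * s)"
    then have "dist w y < 2 ^ n * s" by simp
    then have "dist z y < 2 ^ n * s + 2 ^ n * s"
      using wz dist_triangle[of z y w] dist_commute[of z w] by linarith
    then show "y \<in> ball z (2 ^ (n + 1) * s)" by (simp add: mult_ac)
  qed
  then have "\<bar>ball_avg f w (2 ^ n * s) - ball_avg f z (2 ^ (n + 1) * s)\<bar>
        \<le> doubling_const DIM('a) p a * M * (2 ^ (n + 1) * s) powr a"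
    by (rule ball_avg_nested_diff_le[OF p M f]) (use s in auto)
  with ball_avg_dyadic_diff_le[OF p M f s, of w n] show ?thesis
    by (simp add: algebra_simps)
qed

definition dyadic_sum_const :: "real \<Rightarrow> real" where
  "dyadic_sum_const a = (if a > 0 then 8 powr a / (2 powr a - 1) else 4 / ln 2)"

lemma dyadic_sum_const_pos: "a \<ge> 0 \<Longrightarrow> dyadic_sum_const a > 0"
  unfolding dyadic_sum_const_def by auto

lemma exists_power_of_two_between:
  fixes x :: real
  assumes "x \<ge> 1"
  obtains n :: nat where "x \<le> 2 ^ n" "2 ^ n < 2 * x"
proof
  define n where "n = nat \<lceil>log 2 x\<rceil>"
  have "log 2 x \<ge> 0" using assms by simp
  then have n: "log 2 x \<le> n" "n < log 2 x + 1" unfolding n_def by linarith+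
  have "x = 2 powr log 2 x" using assms by simp
  also have "\<dots> \<le> 2 powr n" using n by simp
  finally show "x \<le> 2 ^ n" by (simp add: powr_realpow)
  have "(2::real) ^ n = 2 powr n" by (simp add: powr_realpow)
  also have "\<dots> < 2 powr (log 2 x + 1)" using n by simp
  also have "\<dots> = 2 * x" using assms by (simp add: powr_add)
  finally show "2 ^ n < 2 * x" .
qed

lemma sum_dyadic_powr_le:
  fixes a s :: real
  assumes a: "a > 0" and s: "s > 0"
  shows "(\<Sum>j\<in>{1..m}. (2 ^ j * s) powr a) \<le> (2 powr a) ^ (m + 1) / (2 powr a - 1) * s powr a"
proof -
  define q where "q = 2 powr a"
  have q: "q > 1" unfolding q_def using a by simp
  have "(\<Sum>j\<in>{1..m}. (2 ^ j * s) powr a) = (\<Sum>j\<in>{1..m}. q ^ j * s powr a)"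
    using s by (intro sum.cong) (auto simp: q_def powr_mult powr_realpow[symmetric] powr_powr mult.commute)
  also have "\<dots> = (\<Sum>j\<in>{1..m}. q ^ j) * s powr a"
    by (rule sum_distrib_right[symmetric])
  also have "(\<Sum>j\<in>{1..m}. q ^ j) \<le> (\<Sum>j<m + 1. q ^ j)"
    by (rule sum_mono2) (use q in auto)
  also have "\<dots> = (q ^ (m + 1) - 1) / (q - 1)"
    using q by (intro geometric_sum) simp
  also have "\<dots> \<le> q ^ (m + 1) / (q - 1)"
    using q by (simp add: divide_right_mono)
  finally show ?thesis
    unfolding q_def using s by (simp add: mult_right_mono)
qed

lemma exists_dyadic_scale:
  fixes K r a :: real
  assumes a: "0 \<le> a" and K: "K \<ge> 2" and r: "r > 0"
  obtains n :: nat where "K ^ 2 \<le> 2 ^ n"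
    "(\<Sum>j\<in>{1..n + 1}. (2 ^ j * (r / K)) powr a) \<le> dyadic_sum_const a * rho a K * r powr a"
proof -
  have "(1::real) \<le> K ^ 2" using K by (simp add: one_le_power)
  then obtain n where n: "K ^ 2 \<le> 2 ^ n" "(2::real) ^ n < 2 * K ^ 2"
    by (rule exists_power_of_two_between)
  have K0: "K > 0" using K by simp
  have "(\<Sum>j\<in>{1..n + 1}. (2 ^ j * (r / K)) powr a) \<le> dyadic_sum_const a * rho a K * r powr a"
  proof (cases "a = 0")
    case True
    have "real n < log 2 (2 * K ^ 2)"
      using n(2) K0 by (simp add: less_log_iff powr_realpow)
    also have "\<dots> = 1 + 2 * log 2 K"
      using K0 by (simp add: log_mult log_nat_power)
    finally have "real n < 1 + 2 * log 2 K" .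
    moreover have "1 \<le> log 2 K"
      using K by (simp add: le_log_iff)
    ultimately have "real (n + 1) \<le> 4 * log 2 K"
      by linarith
    then show ?thesis
      using True r K0 by (simp add: dyadic_sum_const_def rho_def log_def)
  next
    case False
    then have a: "a > 0" using a by simp
    have "(\<Sum>j\<in>{1..n + 1}. (2 ^ j * (r / K)) powr a)
          \<le> (2 powr a) ^ (n + 2) / (2 powr a - 1) * (r / K) powr a"
      using sum_dyadic_powr_le[OF a, of "r / K" "n + 1"] r K0 by simp
    also have "\<dots> \<le> 4 powr a * (2 * K ^ 2) powr a / (2 powr a - 1) * (r / K) powr a"
    proof -
      have "(2 powr a) ^ (n + 2) = 4 powr a * ((2::real) ^ n) powr a"
        by (simp add: powr_realpow[symmetric] powr_powr powr_add powr_mult[symmetric] algebra_simps)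
      also have "\<dots> \<le> 4 powr a * (2 * K ^ 2) powr a"
        using n(2) a by (intro mult_left_mono powr_mono2) auto
      moreover have "1 \<le> 2 powr a" using a by (intro ge_one_powr_ge_zero) auto
      ultimately show ?thesis
        by (intro mult_right_mono divide_right_mono) auto
    qed
    also have "\<dots> = dyadic_sum_const a * rho a K * r powr a"
    proof -
      have "(2 * K ^ 2) powr a = 2 powr a * K powr a * K powr a"
        using K0 by (simp add: powr_mult power2_eq_square)
      moreover have "(r / K) powr a = r powr a / K powr a"
        using r K0 by (simp add: powr_divide)
      moreover have "(8::real) powr a = 4 powr a * 2 powr a"
        by (simp add: powr_mult[symmetric])
      ultimately show ?thesis
        using a K0 by (simp add: dyadic_sum_const_def rho_def)
    qed
    finally show ?thesis .
  qed
  with n(1) show ?thesis by (rule that)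
qed

lemma card_separated_packing_le:
  fixes W :: "'a::euclidean_space set"
  assumes W: "finite W" and s: "s > 0"
    and sep: "\<And>u v. u \<in> W \<Longrightarrow> v \<in> W \<Longrightarrow> u \<noteq> v \<Longrightarrow> s \<le> dist u v"
    and S: "(\<Union>w\<in>W. ball w (s / 2)) \<subseteq> S" "S \<in> sets lebesgue"
  shows "ennreal (real (card W) * (unit_ball_vol DIM('a) * (s / 2) ^ DIM('a))) \<le> emeasure lebesgue S"
proof -
  have "disjoint_family_on (\<lambda>w. ball w (s / 2)) W"
    unfolding disjoint_family_on_def
  proof (intro ballI impI)
    fix u v assume "u \<in> W" "v \<in> W" "u \<noteq> v"
    then have "s \<le> dist u v" by (rule sep)
    then show "ball u (s / 2) \<inter> ball v (s / 2) = {}"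
      by (auto simp: mem_ball) (smt (verit) dist_commute dist_triangle)
  qed
  then have "(\<Sum>w\<in>W. emeasure lebesgue (ball w (s / 2))) = emeasure lebesgue (\<Union>w\<in>W. ball w (s / 2))"
    using W by (intro sum_emeasure) auto
  also have "\<dots> \<le> emeasure lebesgue S"
    using S by (intro emeasure_mono) auto
  also have "(\<Sum>w\<in>W. emeasure lebesgue (ball w (s / 2)))
             = (\<Sum>w\<in>W. ennreal (unit_ball_vol DIM('a) * (s / 2) ^ DIM('a)))"
    using s by (simp add: emeasure_ball)
  also have "\<dots> = ennreal (real (card W) * (unit_ball_vol DIM('a) * (s / 2) ^ DIM('a)))"
    using s by (subst sum_ennreal) auto
  finally show ?thesis .
qed

lemma maximal_separated_set_covers:
  fixes A :: "'a::metric_space set"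
  assumes s: "s > 0"
    and bound: "\<And>W. finite W \<Longrightarrow> W \<subseteq> A \<Longrightarrow> (\<forall>u\<in>W. \<forall>v\<in>W. u \<noteq> v \<longrightarrow> s \<le> dist u v) \<Longrightarrow>
                  real (card W) \<le> N"
  obtains W where "finite W" "W \<subseteq> A" "A \<subseteq> (\<Union>w\<in>W. ball w s)" "real (card W) \<le> N"
proof -
  define P where "P = (\<lambda>W. finite W \<and> W \<subseteq> A \<and> (\<forall>u\<in>W. \<forall>v\<in>W. u \<noteq> v \<longrightarrow> s \<le> dist u v))"
  have "card W < nat \<lceil>N\<rceil> + 1" if "P W" for W
    using bound[of W] that unfolding P_def by linarith
  moreover have "P {}" unfolding P_def by simp
  ultimately obtain W where W: "P W" and max: "\<And>W'. P W' \<Longrightarrow> card W' \<le> card W"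
    using ex_has_greatest_nat[of P "{}" card] by blast
  have "A \<subseteq> (\<Union>w\<in>W. ball w s)"
  proof
    fix y assume y: "y \<in> A"
    show "y \<in> (\<Union>w\<in>W. ball w s)"
    proof (rule ccontr)
      assume "y \<notin> (\<Union>w\<in>W. ball w s)"
      then have far: "\<forall>w\<in>W. s \<le> dist w y" by (auto simp: not_less)
      then have "y \<notin> W" using s by force
      have "P (insert y W)" using W far y unfolding P_def by (auto simp: dist_commute)
      then have "card (insert y W) \<le> card W" by (rule max)
      with \<open>y \<notin> W\<close> W show False unfolding P_def by simp
    qed
  qed
  with W bound show ?thesis unfolding P_def by (intro that) auto
qed

lemma nn_set_integral_le_card_cover:
  assumes W: "finite W" "S \<subseteq> (\<Union>w\<in>W. B w)" and [measurable]: "\<And>w. w \<in> W \<Longrightarrow> B w \<in> sets M"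
    and [measurable]: "g \<in> borel_measurable M"
    and bound: "\<And>w. w \<in> W \<Longrightarrow> (\<integral>\<^sup>+ y\<in>B w. g y \<partial>M) \<le> ennreal T" and T: "T \<ge> 0"
  shows "(\<integral>\<^sup>+ y\<in>S. g y \<partial>M) \<le> ennreal (real (card W) * T)"
proof -
  have "(\<integral>\<^sup>+ y\<in>S. g y \<partial>M) \<le> (\<integral>\<^sup>+ y. (\<Sum>w\<in>W. g y * indicator (B w) y) \<partial>M)"
  proof (rule nn_integral_mono)
    fix y
    show "g y * indicator S y \<le> (\<Sum>w\<in>W. g y * indicator (B w) y)"
    proof (cases "y \<in> S")
      case True
      then obtain w where w: "w \<in> W" "y \<in> B w" using W(2) by blast
      then have "g y * indicator S y = g y * indicator (B w) y" using True by simp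
      also have "\<dots> \<le> (\<Sum>w\<in>W. g y * indicator (B w) y)"
        by (rule member_le_sum) (use w W(1) in auto)
      finally show ?thesis .
    qed simp
  qed
  also have "\<dots> = (\<Sum>w\<in>W. \<integral>\<^sup>+ y\<in>B w. g y \<partial>M)"
    by (rule nn_integral_sum) measurable
  also have "\<dots> \<le> (\<Sum>w\<in>W. ennreal T)"
    by (rule sum_mono) (rule bound)
  also have "\<dots> = ennreal (real (card W) * T)"
    using T by (simp add: ennreal_mult ennreal_of_nat_eq_real_of_nat)
  finally show ?thesis .
qed

definition comp_const :: "real \<Rightarrow> real \<Rightarrow> real \<Rightarrow> real" where
  "comp_const d p a = 2 powr (p + 1) * 4 powr d * 2 powr p * (2 powr p + 2 powr d * dyadic_sum_const a powr p)"

lemma comp_const_pos: "a \<ge> 0 \<Longrightarrow> comp_const d p a > 0"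
  unfolding comp_const_def using dyadic_sum_const_pos[of a] by (intro mult_pos_pos add_pos_nonneg) auto

locale measure_preserving_bilipschitz =
  fixes \<phi> \<psi> :: "'a::euclidean_space \<Rightarrow> 'a" and K :: real
  assumes homeomorphism: "homeomorphism UNIV UNIV \<phi> \<psi>"
    and lipschitz: "\<And>x y. dist (\<phi> x) (\<phi> y) \<le> K * dist x y"
    and colipschitz: "\<And>x y. dist x y \<le> K * dist (\<phi> x) (\<phi> y)"
    and K_ge: "K \<ge> 2"
    and preserves: "preserves_lebesgue \<phi>"
begin

lemma phi_psi [simp]: "\<phi> (\<psi> y) = y"
  using homeomorphism_apply2[OF homeomorphism] by simp

lemma psi_phi [simp]: "\<psi> (\<phi> x) = x"
  using homeomorphism_apply1[OF homeomorphism] by simp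

lemma K_pos: "K > 0"
  using K_ge by simp

lemma psi_lipschitz: "dist (\<psi> u) (\<psi> v) \<le> K * dist u v"
  using colipschitz[of "\<psi> u" "\<psi> v"] by simp

lemma vimage_phi: "\<phi> -` A = \<psi> ` A"
  using psi_phi by (force simp: image_iff)

lemma sets_image_phi: "B \<in> sets lebesgue \<Longrightarrow> \<phi> ` B \<in> sets lebesgue"
  using preserves unfolding preserves_lebesgue_def by auto

lemma emeasure_image_phi: "B \<in> sets lebesgue \<Longrightarrow> emeasure lebesgue (\<phi> ` B) = emeasure lebesgue B"
  using preserves unfolding preserves_lebesgue_def by auto

lemma sets_image_psi:
  assumes "A \<in> sets lebesgue"
  shows "\<psi> ` A \<in> sets lebesgue"
proof (rule sets_lebesgue_continuous_image[OF assms])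
  show "continuous_on UNIV \<psi>"
    using homeomorphism by (simp add: homeomorphism_def)
  show "negligible (\<psi> ` T)" if "negligible T" "T \<subseteq> UNIV" for T
  proof (rule negligible_locally_Lipschitz_image[OF _ that(1)])
    show "\<exists>U B. open U \<and> x \<in> U \<and> (\<forall>y\<in>T \<inter> U. norm (\<psi> y - \<psi> x) \<le> B * norm (y - x))" for x
      using psi_lipschitz by (intro exI[of _ UNIV] exI[of _ K]) (auto simp: dist_norm)
  qed auto
qed auto

lemma measurable_phi: "\<phi> \<in> measurable lebesgue lebesgue"
  by (rule measurableI) (simp_all add: vimage_phi sets_image_psi)

lemma distr_phi: "distr lebesgue lebesgue \<phi> = lebesgue"
proof (rule measure_eqI)
  fix A :: "'a set" assume "A \<in> sets (distr lebesgue lebesgue \<phi>)"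
  then have A: "A \<in> sets lebesgue" by simp
  have "emeasure (distr lebesgue lebesgue \<phi>) A = emeasure lebesgue (\<phi> ` \<psi> ` A)"
    using A measurable_phi by (simp add: emeasure_distr vimage_phi emeasure_image_phi sets_image_psi)
  also have "\<phi> ` \<psi> ` A = A" by (force simp: image_iff)
  finally show "emeasure (distr lebesgue lebesgue \<phi>) A = emeasure lebesgue A" .
qed simp

lemma nn_set_integral_comp:
  assumes g: "g \<in> borel_measurable lebesgue" and B: "B \<in> sets lebesgue"
  shows "(\<integral>\<^sup>+ x\<in>B. g (\<phi> x) \<partial>lebesgue) = (\<integral>\<^sup>+ y\<in>\<phi> ` B. g y \<partial>lebesgue)"
proof -
  have "(\<integral>\<^sup>+ y\<in>\<phi> ` B. g y \<partial>lebesgue) = (\<integral>\<^sup>+ y. g y * indicator (\<phi> ` B) y \<partial>distr lebesgue lebesgue \<phi>)"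
    by (simp add: distr_phi)
  also have "\<dots> = (\<integral>\<^sup>+ x. g (\<phi> x) * indicator (\<phi> ` B) (\<phi> x) \<partial>lebesgue)"
  proof (rule nn_integral_distr[OF measurable_phi])
    show "(\<lambda>y. g y * indicator (\<phi> ` B) y) \<in> borel_measurable (distr lebesgue lebesgue \<phi>)"
      using g sets_image_phi[OF B] by simp
  qed
  also have "\<dots> = (\<integral>\<^sup>+ x\<in>B. g (\<phi> x) \<partial>lebesgue)"
    by (intro nn_integral_cong) (auto simp: indicator_def image_iff, metis psi_phi)
  finally show ?thesis by simp
qed

lemma image_ball_subset: "\<phi> ` ball x r \<subseteq> ball (\<phi> x) (K * r)"
proof
  fix z assume "z \<in> \<phi> ` ball x r"
  then obtain y where y: "z = \<phi> y" "dist x y < r" by auto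
  have "dist (\<phi> x) (\<phi> y) \<le> K * dist x y" by (rule lipschitz)
  also have "\<dots> < K * r" using y K_pos by simp
  finally show "z \<in> ball (\<phi> x) (K * r)" using y by simp
qed

lemma ball_subset_image_ball:
  assumes "w \<in> \<phi> ` ball x0 r"
  shows "ball w (r / K) \<subseteq> \<phi> ` ball x0 (2 * r)"
proof
  fix z assume z: "z \<in> ball w (r / K)"
  obtain x where x: "w = \<phi> x" "dist x0 x < r" using assms by auto
  have "dist x (\<psi> z) \<le> K * dist w z"
    using psi_lipschitz[of w z] x by simp
  also have "\<dots> < r" using z K_pos by (simp add: field_simps)
  finally have "dist x0 (\<psi> z) < 2 * r"
    using x dist_triangle[of x0 "\<psi> z" x] by linarith
  then show "z \<in> \<phi> ` ball x0 (2 * r)"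
    by (force simp: image_iff intro: exI[of _ "\<psi> z"])
qed

text \<open>A set of \<open>r/K\<close>-separated points of \<open>\<phi>(B(x, r))\<close> has at most \<open>(4K)^d\<close> elements: the
  disjoint balls of radius \<open>r/(2K)\<close> around them lie in \<open>\<phi>(B(x, 2r))\<close>, which has the volume of
  \<open>B(x, 2r)\<close>.\<close>

lemma card_separated_image_ball_le:
  assumes r: "r > 0" and W: "finite W" "W \<subseteq> \<phi> ` ball x0 r"
    and sep: "\<And>u v. u \<in> W \<Longrightarrow> v \<in> W \<Longrightarrow> u \<noteq> v \<Longrightarrow> r / K \<le> dist u v"
  shows "real (card W) \<le> (4 * K) ^ DIM('a)"
proof -
  define s where "s = r / K"
  have s: "s > 0" unfolding s_def using r K_pos by simp
  have "(\<Union>w\<in>W. ball w (s / 2)) \<subseteq> \<phi> ` ball x0 (2 * r)"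
    using W ball_subset_image_ball s unfolding s_def by (fastforce simp: subset_iff)
  then have "ennreal (real (card W) * (unit_ball_vol DIM('a) * (s / 2) ^ DIM('a)))
             \<le> emeasure lebesgue (\<phi> ` ball x0 (2 * r))"
    using card_separated_packing_le[OF W(1) s] sep sets_image_phi unfolding s_def by auto
  also have "\<dots> = ennreal (unit_ball_vol DIM('a) * (2 * r) ^ DIM('a))"
    using r by (simp add: emeasure_image_phi emeasure_ball)
  finally have "real (card W) * (s / 2) ^ DIM('a) \<le> (2 * r) ^ DIM('a)"
    using r by (simp add: ennreal_le_iff)
  also have "2 * r = 4 * K * (s / 2)"
    unfolding s_def using K_pos by simp
  then have "(2 * r) ^ DIM('a) = (4 * K) ^ DIM('a) * (s / 2) ^ DIM('a)"
    by (metis power_mult_distrib)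
  finally show ?thesis
    using s by simp
qed

lemma image_ball_cover:
  assumes r: "r > 0"
  obtains W where "finite W" "W \<subseteq> \<phi> ` ball x0 r" "\<phi> ` ball x0 r \<subseteq> (\<Union>w\<in>W. ball w (r / K))"
    "real (card W) \<le> (4 * K) ^ DIM('a)"
proof (rule maximal_separated_set_covers[of "r / K" "\<phi> ` ball x0 r" "(4 * K) ^ DIM('a)"])
  show "0 < r / K" using r K_pos by simp
next
  fix W assume "finite W" "W \<subseteq> \<phi> ` ball x0 r" "\<forall>u\<in>W. \<forall>v\<in>W. u \<noteq> v \<longrightarrow> r / K \<le> dist u v"
  then show "real (card W) \<le> (4 * K) ^ DIM('a)"
    by (intro card_separated_image_ball_le[OF r]) auto
qed (rule that)

lemma set_integrable_comp_ball:
  fixes f :: "'a \<Rightarrow> real"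
  assumes "locally_integrable f"
  shows "set_integrable lebesgue (ball x r) (f \<circ> \<phi>)"
  unfolding set_integrable_def integrable_iff_bounded
proof
  have f: "f \<in> borel_measurable lebesgue"
    by (rule locally_integrable_borel_measurable[OF assms])
  have f_phi: "(\<lambda>y. f (\<phi> y)) \<in> borel_measurable lebesgue"
    using measurable_comp[OF measurable_phi f] by (simp add: comp_def)
  show "(\<lambda>y. indicator (ball x r) y *\<^sub>R (f \<circ> \<phi>) y) \<in> borel_measurable lebesgue"
    by (intro borel_measurable_scaleR borel_measurable_indicator) (simp_all add: f_phi)
  have "(\<integral>\<^sup>+ y. ennreal (norm (indicator (ball x r) y *\<^sub>R (f \<circ> \<phi>) y)) \<partial>lebesgue)
      = (\<integral>\<^sup>+ y\<in>ball x r. ennreal (norm (f (\<phi> y))) \<partial>lebesgue)"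
    by (intro nn_integral_cong) (auto split: split_indicator)
  also have "\<dots> = (\<integral>\<^sup>+ y\<in>\<phi> ` ball x r. ennreal (norm (f y)) \<partial>lebesgue)"
    using f by (intro nn_set_integral_comp) auto
  also have "\<dots> \<le> (\<integral>\<^sup>+ y. ennreal (norm (indicator (ball (\<phi> x) (K * r)) y *\<^sub>R f y)) \<partial>lebesgue)"
    using image_ball_subset[of x r] by (intro nn_integral_mono) (auto split: split_indicator)
  also have "\<dots> < \<infinity>"
    using locally_integrable_set_integrable_ball[OF assms, of "\<phi> x" "K * r"]
    unfolding set_integrable_def integrable_iff_bounded by blast
  finally show "(\<integral>\<^sup>+ y. ennreal (norm (indicator (ball x r) y *\<^sub>R (f \<circ> \<phi>) y)) \<partial>lebesgue) < \<infinity>" .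
qed

lemma rho_ge_half: "0 \<le> a \<Longrightarrow> rho a K \<ge> 1 / 2"
proof (cases "a > 0")
  case True
  have "1 \<le> K powr a" using K_ge True by (intro ge_one_powr_ge_zero) auto
  then show ?thesis using True by (simp add: rho_def)
next
  case False
  have "ln (1 / 2 :: real) \<le> 1 / 2 - 1" by (rule ln_le_minus_one) simp
  then have "1 / 2 \<le> ln (2::real)" by (simp add: ln_div)
  also have "\<dots> \<le> ln K" using K_ge by simp
  finally show ?thesis using False by (simp add: rho_def)
qed

text \<open>All the small balls of radius \<open>r/K\<close> centred in \<open>\<phi>(B(x, r))\<close> are linked to one ball
  \<open>B(\<phi>(x), 2^(n+1) r/K)\<close> by chains of doublings of length \<open>n + 1 \<approx> 2 log\<^sub>2 K\<close>.\<close>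

lemma exists_common_ball_avg:
  fixes f :: "'a \<Rightarrow> real"
  assumes p: "p \<ge> 1" "0 \<le> a" and M: "M \<ge> 0" and f: "locally_integrable f" "sharp_norm p a f \<le> ennreal M"
    and r: "r > 0"
  obtains c where "\<And>w. w \<in> \<phi> ` ball x r \<Longrightarrow> \<bar>ball_avg f w (r / K) - c\<bar>
      \<le> 2 powr (DIM('a) / p) * (dyadic_sum_const a * rho a K) * M * measure lebesgue (ball x r) powr (a / DIM('a))"
proof -
  obtain n where n: "K ^ 2 \<le> 2 ^ n"
    and sum: "(\<Sum>j\<in>{1..n + 1}. (2 ^ j * (r / K)) powr a) \<le> dyadic_sum_const a * rho a K * r powr a"
    using exists_dyadic_scale[OF p(2) K_ge r] by blast
  define s where "s = r / K"
  have s: "s > 0" unfolding s_def using r K_pos by simp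
  show ?thesis
  proof (rule that[of "ball_avg f (\<phi> x) (2 ^ (n + 1) * s)"])
    fix w assume "w \<in> \<phi> ` ball x r"
    then obtain y where y: "w = \<phi> y" "dist x y < r" by auto
    have "dist w (\<phi> x) \<le> K * dist y x" unfolding y by (rule lipschitz)
    also have "\<dots> \<le> K * r" using y K_pos by (simp add: dist_commute)
    also have "\<dots> \<le> 2 ^ n * s"
      using n r K_pos unfolding s_def by (simp add: power2_eq_square field_simps)
    finally have "\<bar>ball_avg f w s - ball_avg f (\<phi> x) (2 ^ (n + 1) * s)\<bar>
          \<le> doubling_const DIM('a) p a * M * (\<Sum>j\<in>{1..n + 1}. (2 ^ j * s) powr a)"
      by (rule ball_avg_chain_diff_le[OF p(1) M f s])
    also have "\<dots> \<le> doubling_const DIM('a) p a * M * (dyadic_sum_const a * rho a K * r powr a)"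
      using sum M unfolding s_def by (intro mult_left_mono) (auto simp: doubling_const_nonneg)
    also have "\<dots> = 2 powr (DIM('a) / p) * (dyadic_sum_const a * rho a K) * M
                    * measure lebesgue (ball x r) powr (a / DIM('a))"
      unfolding measure_lebesgue_ball_powr[OF r] by (simp add: doubling_const_def mult_ac)
    finally show "\<bar>ball_avg f w (r / K) - ball_avg f (\<phi> x) (2 ^ (n + 1) * s)\<bar>
          \<le> 2 powr (DIM('a) / p) * (dyadic_sum_const a * rho a K) * M * measure lebesgue (ball x r) powr (a / DIM('a))"
      by (simp add: s_def)
  qed
qed

lemma dev_integral_image_ball_le:
  fixes f :: "'a \<Rightarrow> real"
  assumes p: "p \<ge> 1" "0 \<le> a" and M: "M \<ge> 0" and f: "locally_integrable f" "sharp_norm p a f \<le> ennreal M"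
    and r: "r > 0"
  obtains c where "dev_integral p f (\<phi> ` ball x r) c
    \<le> ennreal (4 ^ DIM('a) * 2 powr p * (1 + 2 powr DIM('a) * (dyadic_sum_const a * rho a K) powr p)
               * M powr p * measure lebesgue (ball x r) powr (1 + a * p / DIM('a)))"
proof -
  define V where "V = measure lebesgue (ball x r)"
  define s where "s = r / K"
  define Vs where "Vs = unit_ball_vol DIM('a) * s ^ DIM('a)"
  define L where "L = dyadic_sum_const a * rho a K"
  define T where "T = 2 powr p * (1 + 2 powr DIM('a) * L powr p) * M powr p * V powr (a * p / DIM('a))"
  have V: "V > 0" unfolding V_def using r by (rule measure_lebesgue_ball_pos)
  have s: "s > 0" unfolding s_def using r K_pos by simp
  have "s \<le> r" unfolding s_def using r K_ge by (simp add: divide_le_eq)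
  then have Vs: "Vs \<le> V" and Vs_ball: "\<And>w :: 'a. measure lebesgue (ball w s) = Vs"
    unfolding Vs_def V_def using s by (simp_all add: content_ball power_mono)
  have L: "L \<ge> 0"
    unfolding L_def using dyadic_sum_const_pos[OF p(2)] rho_ge_half[OF p(2)] by simp
  obtain c where c: "\<And>w. w \<in> \<phi> ` ball x r \<Longrightarrow>
      \<bar>ball_avg f w s - c\<bar> \<le> 2 powr (DIM('a) / p) * L * M * V powr (a / DIM('a))"
    using exists_common_ball_avg[OF p M f r] unfolding L_def V_def s_def by blast
  obtain W where W: "finite W" "W \<subseteq> \<phi> ` ball x r" "\<phi> ` ball x r \<subseteq> (\<Union>w\<in>W. ball w s)"
    "real (card W) \<le> (4 * K) ^ DIM('a)"
    using image_ball_cover[OF r] unfolding s_def by blast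
  have "dev_integral p f (ball w s) c \<le> ennreal (T * Vs)" if "w \<in> W" for w
  proof -
    have "measure lebesgue (ball w s) \<le> V" using Vs unfolding Vs_ball .
    moreover have "w \<in> \<phi> ` ball x r" using that W(2) by blast
    ultimately show ?thesis
      using dev_integral_small_ball_le[OF p M f s _ L c] unfolding Vs_ball T_def by blast
  qed
  moreover have TVs: "T * Vs \<ge> 0" unfolding T_def Vs_def using L s by simp
  ultimately have "dev_integral p f (\<phi> ` ball x r) c \<le> ennreal (real (card W) * (T * Vs))"
    using W(1,3) locally_integrable_borel_measurable[OF f(1)]
    by (intro nn_set_integral_le_card_cover) auto
  also have "\<dots> \<le> ennreal ((4 * K) ^ DIM('a) * (T * Vs))"
    using W(4) TVs by (intro ennreal_leI mult_right_mono)
  also have "(4 * K) ^ DIM('a) * Vs = 4 ^ DIM('a) * V"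
    unfolding Vs_def V_def s_def using r K_pos
    by (simp add: content_ball power_mult_distrib power_divide)
  then have "(4 * K) ^ DIM('a) * (T * Vs) = T * (4 ^ DIM('a) * V)"
    by (metis mult.left_commute)
  finally show ?thesis
    using V by (intro that) (simp add: T_def L_def V_def powr_add mult_ac)
qed

lemma dev_integral_comp_ball_le:
  fixes f :: "'a \<Rightarrow> real"
  assumes p: "p \<ge> 1" "0 \<le> a" and M: "M \<ge> 0" and f: "locally_integrable f" "sharp_norm p a f \<le> ennreal M"
    and r: "r > 0"
  shows "dev_integral p (f \<circ> \<phi>) (ball x r) (ball_avg (f \<circ> \<phi>) x r)
    \<le> ennreal (comp_const DIM('a) p a * rho a K powr p * M powr p
               * measure lebesgue (ball x r) powr (1 + a * p / DIM('a)))"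
proof -
  define L where "L = dyadic_sum_const a * rho a K"
  define V where "V = measure lebesgue (ball x r)"
  define E where "E = 4 ^ DIM('a) * 2 powr p * (1 + 2 powr DIM('a) * L powr p)"
  have \<rho>: "rho a K \<ge> 1 / 2" by (rule rho_ge_half[OF p(2)])
  have L: "L powr p = dyadic_sum_const a powr p * rho a K powr p"
    unfolding L_def using \<rho> dyadic_sum_const_pos[OF p(2)] by (simp add: powr_mult)
  have "1 \<le> (2 * rho a K) powr p" using \<rho> p by (simp add: ge_one_powr_ge_zero)
  then have "1 + 2 powr DIM('a) * L powr p
             \<le> (2 powr p + 2 powr DIM('a) * dyadic_sum_const a powr p) * rho a K powr p"
    using \<rho> by (simp add: L powr_mult algebra_simps)
  then have E: "2 powr (p + 1) * E \<le> comp_const DIM('a) p a * rho a K powr p"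
    by (simp add: E_def comp_const_def powr_realpow mult_ac)
  obtain c where c: "dev_integral p f (\<phi> ` ball x r) c \<le> ennreal (E * M powr p * V powr (1 + a * p / DIM('a)))"
    using dev_integral_image_ball_le[OF p M f r] unfolding E_def L_def V_def by blast
  have f_meas: "f \<in> borel_measurable lebesgue"
    by (rule locally_integrable_borel_measurable[OF f(1)])
  have "dev_integral p (f \<circ> \<phi>) (ball x r) (ball_avg (f \<circ> \<phi>) x r)
        \<le> ennreal (2 powr (p + 1)) * dev_integral p (f \<circ> \<phi>) (ball x r) c"
    by (rule dev_integral_ball_avg_le[OF p(1) measurable_comp[OF measurable_phi f_meas]
          set_integrable_comp_ball[OF f(1)] r])
  also have "dev_integral p (f \<circ> \<phi>) (ball x r) c = dev_integral p f (\<phi> ` ball x r) c"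
    using f_meas nn_set_integral_comp[where g = "\<lambda>y. ennreal (\<bar>f y - c\<bar> powr p)", of "ball x r"]
    by simp
  also have "ennreal (2 powr (p + 1)) * \<dots> \<le> ennreal (2 powr (p + 1) * E * M powr p * V powr (1 + a * p / DIM('a)))"
    using mult_left_mono[OF c, of "ennreal (2 powr (p + 1))"] by (simp add: ennreal_mult'[symmetric] mult.assoc)
  also have "\<dots> \<le> ennreal (comp_const DIM('a) p a * rho a K powr p * M powr p * V powr (1 + a * p / DIM('a)))"
    using E by (intro ennreal_leI mult_right_mono) auto
  finally show ?thesis unfolding V_def .
qed

lemma sharp_norm_comp_le:
  fixes f :: "'a \<Rightarrow> real"
  assumes p: "p \<ge> 1" "0 \<le> a" and f: "locally_integrable f"
  shows "sharp_norm p a (f \<circ> \<phi>)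
           \<le> ennreal (comp_const DIM('a) p a powr (1 / p) * rho a K) * sharp_norm p a f"
proof -
  define C where "C = comp_const DIM('a) p a powr (1 / p) * rho a K"
  have comp_const: "comp_const DIM('a) p a > 0" by (rule comp_const_pos[OF p(2)])
  have C: "C > 0"
    unfolding C_def using comp_const rho_ge_half[OF p(2)] by simp
  show ?thesis
  proof (cases "sharp_norm p a f")
    case (real M)
    then have M: "M \<ge> 0" "sharp_norm p a f \<le> ennreal M" by simp_all
    have "(C * M) powr p = comp_const DIM('a) p a * rho a K powr p * M powr p"
      unfolding C_def using comp_const rho_ge_half[OF p(2)] M p
      by (simp add: powr_mult powr_powr)
    then have "sharp_norm p a (f \<circ> \<phi>) \<le> ennreal (C * M)"
      using dev_integral_comp_ball_le[OF p M(1) f M(2)] C M p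
      by (subst sharp_norm_le_ennreal_iff) auto
    then show ?thesis
      using real C M by (simp add: C_def ennreal_mult)
  next
    case top
    then show ?thesis
      unfolding C_def[symmetric] using C by (simp add: ennreal_mult_top)
  qed
qed

end

lemma K_const_upper:
  fixes \<phi> :: "'a::euclidean_space \<Rightarrow> 'a"
  assumes inj: "inj \<phi>" and bl: "bi_lipschitz \<phi>" and xy: "x \<noteq> y"
  shows "dist (\<phi> x) (\<phi> y) / dist x y + dist x y / dist (\<phi> x) (\<phi> y) \<le> K_const \<phi>"
  unfolding K_const_def
proof (rule cSup_upper)
  obtain L where L: "\<And>x y. dist (\<phi> x) (\<phi> y) \<le> L * dist x y" "\<And>x y. dist x y \<le> L * dist (\<phi> x) (\<phi> y)"
    using bl unfolding bi_lipschitz_def by blast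
  show "bdd_above {dist (\<phi> x) (\<phi> y) / dist x y + dist x y / dist (\<phi> x) (\<phi> y) | x y. x \<noteq> y}"
  proof (rule bdd_aboveI, safe)
    fix u v :: 'a assume "u \<noteq> v"
    then have "dist u v > 0" "dist (\<phi> u) (\<phi> v) > 0"
      using inj by (auto simp: inj_eq)
    then have "dist (\<phi> u) (\<phi> v) / dist u v \<le> L" "dist u v / dist (\<phi> u) (\<phi> v) \<le> L"
      using L[of u v] by (simp_all add: pos_divide_le_eq)
    then show "dist (\<phi> u) (\<phi> v) / dist u v + dist u v / dist (\<phi> u) (\<phi> v) \<le> 2 * L"
      by simp
  qed
qed (use xy in blast)

lemma K_const_lipschitz:
  fixes \<phi> :: "'a::euclidean_space \<Rightarrow> 'a"
  assumes "inj \<phi>" "bi_lipschitz \<phi>"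
  shows "dist (\<phi> x) (\<phi> y) \<le> K_const \<phi> * dist x y"
proof (cases "x = y")
  case False
  have "0 \<le> dist x y / dist (\<phi> x) (\<phi> y)" by simp
  then have "dist (\<phi> x) (\<phi> y) / dist x y \<le> K_const \<phi>"
    using K_const_upper[OF assms False] by linarith
  then show ?thesis using False by (simp add: pos_divide_le_eq)
qed simp

lemma K_const_colipschitz:
  fixes \<phi> :: "'a::euclidean_space \<Rightarrow> 'a"
  assumes "inj \<phi>" "bi_lipschitz \<phi>"
  shows "dist x y \<le> K_const \<phi> * dist (\<phi> x) (\<phi> y)"
proof (cases "x = y")
  case False
  then have "\<phi> x \<noteq> \<phi> y" using assms(1) by (auto simp: inj_eq)
  have "0 \<le> dist (\<phi> x) (\<phi> y) / dist x y" by simp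
  then have "dist x y / dist (\<phi> x) (\<phi> y) \<le> K_const \<phi>"
    using K_const_upper[OF assms False] by linarith
  then show ?thesis using \<open>\<phi> x \<noteq> \<phi> y\<close> by (simp add: pos_divide_le_eq)
qed simp

lemma K_const_ge_two:
  fixes \<phi> :: "'a::euclidean_space \<Rightarrow> 'a"
  assumes "inj \<phi>" "bi_lipschitz \<phi>"
  shows "K_const \<phi> \<ge> 2"
proof -
  obtain b :: 'a where "b \<in> Basis" using nonempty_Basis by blast
  then have "b \<noteq> 0" by auto
  define t where "t = dist (\<phi> b) (\<phi> 0) / dist b 0"
  have "t > 0" unfolding t_def using \<open>b \<noteq> 0\<close> assms(1) by (auto simp: inj_eq)
  moreover have "0 \<le> (t - 1) ^ 2" by simp
  ultimately have "2 \<le> t + 1 / t"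
    by (simp add: field_simps power2_eq_square algebra_simps)
  also have "\<dots> \<le> K_const \<phi>"
    using K_const_upper[OF assms \<open>b \<noteq> 0\<close>] unfolding t_def by simp
  finally show ?thesis .
qed

theorem theorem2p1:
  fixes p a :: real
  assumes "1 \<le> p" and "0 \<le> a" and "a < 1"
  shows "\<exists>C>0. \<forall>\<phi> :: 'a::euclidean_space \<Rightarrow> 'a.
           (\<exists>\<psi>. homeomorphism UNIV UNIV \<phi> \<psi>) \<and> bi_lipschitz \<phi> \<and> preserves_lebesgue \<phi> \<longrightarrow>
           (\<forall>f :: 'a \<Rightarrow> real. locally_integrable f \<longrightarrow>
              sharp_norm p a (f \<circ> \<phi>) \<le> ennreal (C * rho a (K_const \<phi>)) * sharp_norm p a f)"
proof (intro exI[of _ "comp_const DIM('a) p a powr (1 / p)"] conjI allI impI)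
  have "comp_const DIM('a) p a > 0" by (rule comp_const_pos[OF assms(2)])
  then show "comp_const DIM('a) p a powr (1 / p) > 0" by simp
  fix \<phi> :: "'a \<Rightarrow> 'a" and f :: "'a \<Rightarrow> real"
  assume \<phi>: "(\<exists>\<psi>. homeomorphism UNIV UNIV \<phi> \<psi>) \<and> bi_lipschitz \<phi> \<and> preserves_lebesgue \<phi>"
    and f: "locally_integrable f"
  then obtain \<psi> where hom: "homeomorphism UNIV UNIV \<phi> \<psi>" by blast
  then have inj: "inj \<phi>"
    by (intro inj_on_inverseI[of _ \<psi>]) (simp add: homeomorphism_apply1)
  from \<phi> have bl: "bi_lipschitz \<phi>" and pres: "preserves_lebesgue \<phi>" by simp_all
  interpret measure_preserving_bilipschitz \<phi> \<psi> "K_const \<phi>"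
    using hom pres K_const_lipschitz[OF inj bl] K_const_colipschitz[OF inj bl] K_const_ge_two[OF inj bl]
    by unfold_locales
  show "sharp_norm p a (f \<circ> \<phi>) \<le> ennreal (comp_const DIM('a) p a powr (1 / p) * rho a (K_const \<phi>)) * sharp_norm p a f"
    using sharp_norm_comp_le[OF assms(1,2) f] .
qed

end
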